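(* Let $k,d,b,\tilde b\ge0$ be measurable on $\mathbb{R}_+$ with $\int_0^{+\infty}k=\int_0^{+\infty}d=+\infty$ and $1<\int_0^{+\infty}\big(b(a)e^{-\int_0^ak}+\tilde b(a)e^{-\int_0^ad}\big)da<+\infty$. Let $c,\eta,\tilde c\in L^\infty_{loc}(\mathbb{R}^2)$ vanish at $(0,0)$, be nonnegative on $\mathbb{R}_+^2$, set $c_{tot}=c+\eta$, and assume $\partial_xc_{tot}>0$, $\partial_yc_{tot}\ge0$, $\partial_x\tilde c\ge0$, $\partial_y\tilde c>0$ and, for all $x_0,y_0\ge0$, $\tilde c(x_0,y)\to+\infty$ as $y\to+\infty$ and $c(x,y_0)\to+\infty$ as $x\to+\infty$. Assume moreover $$\Big\|\frac{\partial c_{tot}}{\partial y}\Big\|_\infty\le\inf_{(x,y)\in\mathbb{R}_+^2}\frac{\partial c_{tot}}{\partial x}(x,y).$$ Then every nonnegative solution $(N_1^*,N_2^* )$ of the steady-state system $$\int_0^{+\infty}\tilde b(a)e^{-\int_0^ad(u)du-\tilde c(N_1,N_2)a}da\cdot\int_0^{+\infty}\big(k(a)+\eta(N_1,N_2)\big)e^{-\int_0^ak(u)du-c_{tot}(N_1,N_2)a}da+\int_0^{+\infty}b(a)e^{-\int_0^ak(u)du-c_{tot}(N_1,N_2)a}da=1,$$ $$N_1\int_0^{+\infty}e^{-\int_0^ad(u)du-\tilde c(N_1,N_2)a}da\cdot\int_0^{+\infty}\big(k(a)+\eta(N_1,N_2)\big)e^{-\int_0^ak(u)du-c_{tot}(N_1,N_2)a}da-N_2\int_0^{+\infty}e^{-\int_0^ak(u)du-c_{tot}(N_1,N_2)a}da=0$$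 satisfies $N_1^*+N_2^*\ge N^*$, where $N^*$ is defined in the context.
   Context: $N^*$ is the total population size at the (unique) steady state of the one-phase model $\partial_tn+\partial_an=-(k(a)+c_{tot}(N(t),0))n$, $n(t,0)=\int_0^{+\infty}bn\,da$, $N(t)=\int_0^{+\infty}n(t,a)da$. Explicitly: if $\int_0^{+\infty}b(a)e^{-\int_0^ak}da>1$, let $\mu_0>0$ be the unique solution of $\int_0^{+\infty}b(a)e^{-\int_0^ak(u)du-\mu_0a}da=1$ and let $N^*>0$ be the unique value with $c_{tot}(N^*,0)=\mu_0$; if $\int_0^{+\infty}b(a)e^{-\int_0^ak}da\le1$, then $N^*=0$. The steady-state system characterises non-trivial steady states $(N_1,N_2)=(\int n_1^*,\int n_2^* )$ of the two-phase model with competition kernels identically equal to one. *)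

theory Defs
  imports "HOL-Analysis.Analysis"
begin

definition cumint :: "(real \<Rightarrow> real) \<Rightarrow> real \<Rightarrow> ennreal" where
  "cumint k a = (\<integral>\<^sup>+ u \<in> {0..a}. ennreal (k u) \<partial>lborel)"

definition surv :: "(real \<Rightarrow> real) \<Rightarrow> real \<Rightarrow> real" where
  "surv k a = (if cumint k a = \<infinity> then 0 else exp (- enn2real (cumint k a)))"

definition Ipos :: "(real \<Rightarrow> real) \<Rightarrow> ennreal" where
  "Ipos f = (\<integral>\<^sup>+ a \<in> {0..}. ennreal (f a) \<partial>lborel)"

text \<open>Characterisation of \<open>N*\<close> (steady state total population of the one-phase model),
  given \<open>k\<close>, \<open>b\<close> and \<open>ctot0 = (\<lambda>N. c_tot(N,0))\<close>.\<close>
definition is_Nstar :: "(real \<Rightarrow> real) \<Rightarrow> (real \<Rightarrow> real) \<Rightarrow> (real \<Rightarrow> real) \<Rightarrow> real \<Rightarrow> bool" where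
  "is_Nstar k b ctot0 N \<longleftrightarrow>
     (Ipos (\<lambda>a. b a * surv k a) \<le> 1 \<and> N = 0) \<or>
     (Ipos (\<lambda>a. b a * surv k a) > 1 \<and> N > 0 \<and>
       (\<exists>\<mu>0>0. Ipos (\<lambda>a. b a * surv k a * exp (- \<mu>0 * a)) = 1 \<and> ctot0 N = \<mu>0))"

end

theory Submission
  imports Defs
begin

text \<open>
  If \<open>N* > 0\<close>, then \<open>c_tot(N*,0) = \<mu>0\<close>. The first steady-state equation bounds the
  Laplace transform of \<open>b exp(-\<integral>k)\<close> at rate \<open>c_tot(N1,N2)\<close> by \<open>1\<close>, its value at rate
  \<open>\<mu>0\<close>; the transform being strictly decreasing, \<open>c_tot(N1,N2) \<ge> \<mu>0 = c_tot(N*,0)\<close>.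
  On the other hand, moving the mass \<open>N2\<close> from the second variable into the first
  cannot decrease \<open>c_tot\<close>: going down to the axis lowers it by at most
  \<open>\<parallel>\<partial>\<^sub>yc_tot\<parallel>\<^sub>\<infinity> N2\<close>, going right along the axis raises it by at least \<open>inf \<partial>\<^sub>xc_tot N2\<close>.
  With strict monotonicity along the axis, \<open>N1 + N2 < N*\<close> would give
  \<open>c_tot(N1,N2) < c_tot(N*,0)\<close>. Since the bound on \<open>\<partial>\<^sub>yc_tot\<close> only holds almost everywhere
  in the plane, the vertical segment is taken at an abscissa slightly to the right
  of \<open>N1\<close> on which it holds for almost every \<open>y\<close>.
\<close>

lemma mvt_within:
  fixes f f' :: "real \<Rightarrow> real"
  assumes "a \<le> b" "{a..b} \<subseteq> S"
    and deriv: "\<And>z. z \<in> S \<Longrightarrow> (f has_real_derivative f' z) (at z within S)"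
  shows "\<exists>\<xi>\<in>{a..b}. f b - f a = f' \<xi> * (b - a)"
proof -
  have "\<exists>\<xi>\<in>{a..b}. f b - f a = (\<lambda>h. f' \<xi> * h) (b - a)"
  proof (rule mvt_very_simple[OF \<open>a \<le> b\<close>])
    fix z assume "a \<le> z" "z \<le> b"
    then have "(f has_real_derivative f' z) (at z within S)"
      using deriv assms(2) by auto
    then show "(f has_derivative (\<lambda>h. f' z * h)) (at z within {a..b})"
      unfolding has_field_derivative_def by (rule has_derivative_subset) fact
  qed
  then show ?thesis by simp
qed

lemma increment_ge_of_deriv_ge:
  fixes f f' :: "real \<Rightarrow> real"
  assumes "a \<le> b" "{a..b} \<subseteq> S"
    and "\<And>z. z \<in> S \<Longrightarrow> (f has_real_derivative f' z) (at z within S)"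
    and "\<And>z. z \<in> {a..b} \<Longrightarrow> L \<le> f' z"
  shows "L * (b - a) \<le> f b - f a"
proof -
  obtain \<xi> where "\<xi> \<in> {a..b}" "f b - f a = f' \<xi> * (b - a)"
    using mvt_within[OF assms(1-3)] by blast
  then show ?thesis
    using mult_right_mono[of L "f' \<xi>" "b - a"] assms(1,4) by simp
qed

lemma less_of_deriv_pos:
  fixes f f' :: "real \<Rightarrow> real"
  assumes "a < b" "{a..b} \<subseteq> S"
    and "\<And>z. z \<in> S \<Longrightarrow> (f has_real_derivative f' z) (at z within S)"
    and "\<And>z. z \<in> {a..b} \<Longrightarrow> 0 < f' z"
  shows "f a < f b"
  using mvt_within[OF less_imp_le[OF assms(1)] assms(2,3)] assms(1,4)
  by (metis diff_gt_0_iff_gt mult_pos_pos)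

lemma increment_le_of_deriv_le_AE:
  fixes f f' :: "real \<Rightarrow> real"
  assumes "a \<le> b" "{a..b} \<subseteq> S"
    and deriv: "\<And>z. z \<in> S \<Longrightarrow> (f has_real_derivative f' z) (at z within S)"
    and bound: "AE z in lborel. z \<in> {a..b} \<longrightarrow> f' z \<le> L"
  shows "f b - f a \<le> L * (b - a)"
proof -
  have ftc: "(f' has_integral (f b - f a)) {a..b}"
  proof (rule fundamental_theorem_of_calculus[OF \<open>a \<le> b\<close>])
    fix z assume "z \<in> {a..b}"
    then have "(f has_vector_derivative f' z) (at z within S)"
      using deriv assms(2) by (auto simp: has_real_derivative_iff_has_vector_derivative)
    then show "(f has_vector_derivative f' z) (at z within {a..b})"
      by (rule has_vector_derivative_within_subset) fact
  qed
  from bound obtain N where N: "{z \<in> space lborel. \<not> (z \<in> {a..b} \<longrightarrow> f' z \<le> L)} \<subseteq> N"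
    "emeasure lborel N = 0" "N \<in> sets lborel"
    by (rule AE_E)
  then have "negligible N"
    by (simp add: negligible_iff_null_sets null_sets_completionI null_setsI)
  then have "((\<lambda>z. min (f' z) L) has_integral (f b - f a)) {a..b}"
  proof (rule has_integral_spike[OF _ _ ftc])
    show "min (f' z) L = f' z" if "z \<in> {a..b} - N" for z
      using N(1) that by auto
  qed
  moreover have "((\<lambda>z. L) has_integral (L * (b - a))) {a..b}"
    using has_integral_const_real[of L a b] \<open>a \<le> b\<close> by (simp add: mult.commute)
  ultimately show ?thesis
    by (rule has_integral_le) simp
qed

lemma AE_le_Inf:
  fixes f :: "'a \<Rightarrow> real"
  assumes "T \<noteq> {}" "bdd_below T"
    and bound: "\<And>t. t \<in> T \<Longrightarrow> AE x in M. P x \<longrightarrow> f x \<le> t"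
  shows "AE x in M. P x \<longrightarrow> f x \<le> Inf T"
proof -
  have "AE x in M. P x \<longrightarrow> f x \<le> Inf T + 1 / Suc n" for n :: nat
  proof -
    have "Inf T < Inf T + 1 / Suc n"
      by simp
    then obtain t where "t \<in> T" "t < Inf T + 1 / Suc n"
      using cInf_less_iff[OF assms(1,2)] by blast
    from bound[OF \<open>t \<in> T\<close>] show ?thesis
      by eventually_elim (use \<open>t < _\<close> in auto)
  qed
  then have "AE x in M. \<forall>n::nat. P x \<longrightarrow> f x \<le> Inf T + 1 / Suc n"
    unfolding AE_all_countable by blast
  then show ?thesis
  proof eventually_elim
    case (elim x)
    show ?case
    proof
      assume "P x"
      show "f x \<le> Inf T"
      proof (rule field_le_epsilon)
        fix e :: real
        assume "0 < e"
        then obtain n where "inverse (real (Suc n)) < e"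
          using reals_Archimedean by blast
        then show "f x \<le> Inf T + e"
          using elim \<open>P x\<close> by (smt (verit) inverse_eq_divide)
      qed
    qed
  qed
qed

lemma AE_section_in_interval:
  fixes Q :: "real \<Rightarrow> real \<Rightarrow> bool"
  assumes "AE p in lborel. Q (fst p) (snd p)" "a < b"
  obtains x where "a < x" "x < b" "AE y in lborel. Q x y"
proof -
  have "AE p in lborel \<Otimes>\<^sub>M lborel. Q (fst p) (snd p)"
    using assms(1) by (subst lborel_prod[where 'a=real and 'b=real])
  then have "AE x in lborel. AE y in lborel. Q x y"
    by (auto dest: lborel_pair.AE_pair)
  then obtain N where N: "{x \<in> space lborel. \<not> (AE y in lborel. Q x y)} \<subseteq> N"
    "emeasure lborel N = 0" "N \<in> sets lborel"
    by (rule AE_E)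
  have "\<not> {a<..<b} \<subseteq> N"
  proof
    assume "{a<..<b} \<subseteq> N"
    then have "emeasure lborel {a<..<b} \<le> emeasure lborel N"
      using N(3) by (intro emeasure_mono)
    then show False
      using N(2) \<open>a < b\<close> by simp
  qed
  then obtain x where "x \<in> {a<..<b}" "x \<notin> N"
    by blast
  then show ?thesis
    using N(1) that by auto
qed

lemma less_axis_value_of_bound:
  fixes F Fx Fy :: "real \<Rightarrow> real \<Rightarrow> real"
  assumes dx: "\<And>x y. x \<ge> 0 \<Longrightarrow> y \<ge> 0 \<Longrightarrow>
        ((\<lambda>x'. F x' y) has_real_derivative Fx x y) (at x within {0..})"
    and dy: "\<And>x y. x \<ge> 0 \<Longrightarrow> y \<ge> 0 \<Longrightarrow>
        ((\<lambda>y'. F x y') has_real_derivative Fy x y) (at y within {0..})"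
    and Fx_nonneg: "\<And>x y. x \<ge> 0 \<Longrightarrow> y \<ge> 0 \<Longrightarrow> 0 \<le> Fx x y"
    and Fx_axis_pos: "\<And>x. x \<ge> 0 \<Longrightarrow> 0 < Fx x 0"
    and Fx_axis_ge: "\<And>x. x \<ge> 0 \<Longrightarrow> L \<le> Fx x 0"
    and Fy_le: "AE p in lborel. fst p \<ge> 0 \<and> snd p \<ge> 0 \<longrightarrow> Fy (fst p) (snd p) \<le> L"
    and "0 \<le> x" "0 \<le> y" "x + y < z"
  shows "F x y < F z 0"
proof -
  have "x < z - y"
    using \<open>x + y < z\<close> by simp
  then obtain x' where x': "x < x'" "x' < z - y"
    and Fy_le_x': "AE t in lborel. x' \<ge> 0 \<and> t \<ge> 0 \<longrightarrow> Fy x' t \<le> L"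
    by (rule AE_section_in_interval[where Q = "\<lambda>x t. x \<ge> 0 \<and> t \<ge> 0 \<longrightarrow> Fy x t \<le> L",
          OF Fy_le])
  have "0 \<le> x'" "x' + y < z"
    using x' \<open>0 \<le> x\<close> by simp_all
  have "0 * (x' - x) \<le> F x' y - F x y"
    by (rule increment_ge_of_deriv_ge[where S = "{0..}" and f = "\<lambda>s. F s y" and f' = "\<lambda>s. Fx s y"])
      (use x' \<open>0 \<le> x\<close> \<open>0 \<le> y\<close> dx Fx_nonneg in auto)
  moreover have "F x' y - F x' 0 \<le> L * (y - 0)"
    by (rule increment_le_of_deriv_le_AE[where S = "{0..}" and f = "F x'" and f' = "Fy x'"])
      (use \<open>0 \<le> x'\<close> \<open>0 \<le> y\<close> dy in \<open>auto intro: eventually_mono[OF Fy_le_x']\<close>)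
  moreover have "L * ((x' + y) - x') \<le> F (x' + y) 0 - F x' 0"
    by (rule increment_ge_of_deriv_ge[where S = "{0..}" and f = "\<lambda>s. F s 0" and f' = "\<lambda>s. Fx s 0"])
      (use \<open>0 \<le> x'\<close> \<open>0 \<le> y\<close> dx Fx_axis_ge in auto)
  moreover have "F (x' + y) 0 < F z 0"
    by (rule less_of_deriv_pos[where S = "{0..}" and f = "\<lambda>s. F s 0" and f' = "\<lambda>s. Fx s 0"])
      (use \<open>x' + y < z\<close> \<open>0 \<le> x'\<close> \<open>0 \<le> y\<close> dx Fx_axis_pos in auto)
  ultimately show ?thesis
    by simp
qed

lemma less_axis_value:
  fixes F Fx Fy :: "real \<Rightarrow> real \<Rightarrow> real"
  assumes dx: "\<And>x y. x \<ge> 0 \<Longrightarrow> y \<ge> 0 \<Longrightarrow>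
        ((\<lambda>x'. F x' y) has_real_derivative Fx x y) (at x within {0..})"
    and dy: "\<And>x y. x \<ge> 0 \<Longrightarrow> y \<ge> 0 \<Longrightarrow>
        ((\<lambda>y'. F x y') has_real_derivative Fy x y) (at y within {0..})"
    and Fx_nonneg: "\<And>x y. x \<ge> 0 \<Longrightarrow> y \<ge> 0 \<Longrightarrow> 0 \<le> Fx x y"
    and Fx_axis_pos: "\<And>x. x \<ge> 0 \<Longrightarrow> 0 < Fx x 0"
    and Fy_bound: "\<And>s. s \<ge> 0 \<Longrightarrow>
        AE p in lborel. fst p \<ge> 0 \<and> snd p \<ge> 0 \<longrightarrow> \<bar>Fy (fst p) (snd p)\<bar> \<le> Fx s 0"
    and "0 \<le> x" "0 \<le> y" "x + y < z"
  shows "F x y < F z 0"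
proof -
  define L where "L = Inf ((\<lambda>s. Fx s 0) ` {0..})"
  have bdd: "bdd_below ((\<lambda>s. Fx s 0) ` {0..})"
    using Fx_axis_pos by (auto intro!: bdd_belowI[of _ 0] less_imp_le)
  then have L_le: "L \<le> Fx s 0" if "s \<ge> 0" for s
    unfolding L_def using that by (auto intro: cInf_lower)
  have "AE p in lborel. fst p \<ge> 0 \<and> snd p \<ge> 0 \<longrightarrow> \<bar>Fy (fst p) (snd p)\<bar> \<le> L"
    unfolding L_def using bdd Fy_bound by (intro AE_le_Inf) auto
  then have "AE p in lborel. fst p \<ge> 0 \<and> snd p \<ge> 0 \<longrightarrow> Fy (fst p) (snd p) \<le> L"
    by eventually_elim auto
  then show ?thesis
    using less_axis_value_of_bound[OF dx dy Fx_nonneg Fx_axis_pos L_le] assms(6-8) by blast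
qed

lemma cumint_mono: "a \<le> a' \<Longrightarrow> cumint k a \<le> cumint k a'"
  unfolding cumint_def by (intro nn_integral_mono) (auto split: split_indicator)

lemma surv_nonneg: "0 \<le> surv k a"
  by (simp add: surv_def)

lemma surv_antimono:
  assumes "a \<le> a'"
  shows "surv k a' \<le> surv k a"
proof (cases "cumint k a' = \<infinity>")
  case False
  have "cumint k a \<le> cumint k a'"
    using assms by (rule cumint_mono)
  with False show ?thesis
    by (auto simp: surv_def top_unique enn2real_mono less_top)
qed (simp add: surv_def)

lemma surv_borel_measurable: "surv k \<in> borel_measurable borel"
proof -
  have "mono (\<lambda>a. - surv k a)"
    by (auto simp: mono_def intro: surv_antimono)
  then have "(\<lambda>a. - (- surv k a)) \<in> borel_measurable borel"
    using borel_measurable_mono borel_measurable_uminus by blast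
  then show ?thesis by simp
qed

lemma Ipos_exp_strict_antimono:
  fixes w :: "real \<Rightarrow> real"
  assumes meas: "set_borel_measurable lborel {0..} w"
    and nonneg: "\<And>a. a \<ge> 0 \<Longrightarrow> 0 \<le> w a"
    and pos: "Ipos (\<lambda>a. w a * exp (- \<mu> * a)) \<noteq> 0"
    and fin: "Ipos (\<lambda>a. w a * exp (- \<mu> * a)) < \<infinity>"
    and "C < \<mu>"
  shows "Ipos (\<lambda>a. w a * exp (- \<mu> * a)) < Ipos (\<lambda>a. w a * exp (- C * a))"
proof -
  define W where "W a = indicator {0..} a *\<^sub>R w a" for a :: real
  have W_meas: "W \<in> borel_measurable lborel"
    using meas unfolding W_def set_borel_measurable_def .
  have W_nonneg: "0 \<le> W a" for a
    using nonneg by (simp add: W_def indicator_def)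
  have Ipos_W: "Ipos (\<lambda>a. w a * exp (- s * a)) = (\<integral>\<^sup>+a. ennreal (W a * exp (- s * a)) \<partial>lborel)"
    for s
    unfolding Ipos_def W_def by (intro nn_integral_cong) (auto split: split_indicator)
  show ?thesis
    unfolding Ipos_W
  proof (rule nn_integral_less)
    show "(\<lambda>a. ennreal (W a * exp (- \<mu> * a))) \<in> borel_measurable lborel"
      using W_meas by simp
    show "(\<lambda>a. ennreal (W a * exp (- C * a))) \<in> borel_measurable lborel"
      using W_meas by simp
    show "(\<integral>\<^sup>+a. ennreal (W a * exp (- \<mu> * a)) \<partial>lborel) \<noteq> \<infinity>"
      using fin unfolding Ipos_W by simp
    show "AE a in lborel. ennreal (W a * exp (- \<mu> * a)) \<le> ennreal (W a * exp (- C * a))"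
    proof (rule AE_I2)
      fix a :: real
      show "ennreal (W a * exp (- \<mu> * a)) \<le> ennreal (W a * exp (- C * a))"
      proof (cases "a \<ge> 0")
        case True
        then have "exp (- \<mu> * a) \<le> exp (- C * a)"
          using \<open>C < \<mu>\<close> by (simp add: mult_right_mono)
        then show ?thesis
          using W_nonneg by (intro ennreal_leI mult_left_mono)
      qed (simp add: W_def)
    qed
    show "\<not> (AE a in lborel. ennreal (W a * exp (- C * a)) \<le> ennreal (W a * exp (- \<mu> * a)))"
    proof
      assume "AE a in lborel. ennreal (W a * exp (- C * a)) \<le> ennreal (W a * exp (- \<mu> * a))"
      then have "AE a in lborel. ennreal (W a * exp (- \<mu> * a)) = 0"
        using AE_lborel_singleton[of 0]
      proof eventually_elim
        case (elim a)
        show ?case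
        proof (cases "a > 0")
          case True
          have "W a * exp (- C * a) \<le> W a * exp (- \<mu> * a)"
            using elim(1) W_nonneg[of a] by (simp add: ennreal_le_iff)
          moreover have "exp (- \<mu> * a) < exp (- C * a)"
            using True \<open>C < \<mu>\<close> by simp
          ultimately have "\<not> 0 < W a"
            using mult_strict_left_mono by (metis leD)
          then show ?thesis
            using W_nonneg[of a] by simp
        qed (use elim in \<open>simp add: W_def\<close>)
      qed
      then show False
        using nn_integral_cong_AE pos unfolding Ipos_W by fastforce
    qed
  qed
qed

lemma Ipos_exp_le_imp_rate_le:
  fixes w :: "real \<Rightarrow> real"
  assumes "set_borel_measurable lborel {0..} w"
    and "\<And>a. a \<ge> 0 \<Longrightarrow> 0 \<le> w a"
    and "Ipos (\<lambda>a. w a * exp (- \<mu> * a)) \<noteq> 0"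
    and "Ipos (\<lambda>a. w a * exp (- \<mu> * a)) < \<infinity>"
    and "Ipos (\<lambda>a. w a * exp (- C * a)) \<le> Ipos (\<lambda>a. w a * exp (- \<mu> * a))"
  shows "\<mu> \<le> C"
proof (rule ccontr)
  assume "\<not> \<mu> \<le> C"
  then have "C < \<mu>"
    by simp
  from Ipos_exp_strict_antimono[OF assms(1-4) this] assms(5) show False
    by simp
qed

lemma set_borel_measurable_mult_surv:
  assumes "set_borel_measurable lborel {0..} b"
  shows "set_borel_measurable lborel {0..} (\<lambda>a. b a * surv k a)"
proof -
  have "(\<lambda>a. indicator {0..} a *\<^sub>R b a * surv k a) \<in> borel_measurable lborel"
    using assms surv_borel_measurable unfolding set_borel_measurable_def
    by (intro borel_measurable_times) simp_all
  then show ?thesis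
    unfolding set_borel_measurable_def by (simp add: mult.assoc)
qed

theorem proposition4:
  fixes k d b bt :: "real \<Rightarrow> real"
    and c \<eta> ct :: "real \<Rightarrow> real \<Rightarrow> real"
    and ctot_x ctot_y ct_x ct_y :: "real \<Rightarrow> real \<Rightarrow> real"
    and N1 N2 Nst :: real
  assumes meas: "set_borel_measurable lborel {0..} k" "set_borel_measurable lborel {0..} d"
      "set_borel_measurable lborel {0..} b" "set_borel_measurable lborel {0..} bt"
    and nonneg: "\<And>a. a \<ge> 0 \<Longrightarrow> k a \<ge> 0" "\<And>a. a \<ge> 0 \<Longrightarrow> d a \<ge> 0"
      "\<And>a. a \<ge> 0 \<Longrightarrow> b a \<ge> 0" "\<And>a. a \<ge> 0 \<Longrightarrow> bt a \<ge> 0"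
    and k_inf: "Ipos k = \<infinity>" and d_inf: "Ipos d = \<infinity>"
    and R_gt: "1 < Ipos (\<lambda>a. b a * surv k a + bt a * surv d a)"
    and R_fin: "Ipos (\<lambda>a. b a * surv k a + bt a * surv d a) < \<infinity>"
    and c_meas: "case_prod c \<in> borel_measurable borel" "case_prod \<eta> \<in> borel_measurable borel"
      "case_prod ct \<in> borel_measurable borel"
    and c_locbdd: "\<And>K. compact K \<Longrightarrow> bounded (case_prod c ` K)"
      "\<And>K. compact K \<Longrightarrow> bounded (case_prod \<eta> ` K)"
      "\<And>K. compact K \<Longrightarrow> bounded (case_prod ct ` K)"
    and c00: "c 0 0 = 0" "\<eta> 0 0 = 0" "ct 0 0 = 0"
    and c_nn: "\<And>x y. x \<ge> 0 \<Longrightarrow> y \<ge> 0 \<Longrightarrow> c x y \<ge> 0"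
      "\<And>x y. x \<ge> 0 \<Longrightarrow> y \<ge> 0 \<Longrightarrow> \<eta> x y \<ge> 0"
      "\<And>x y. x \<ge> 0 \<Longrightarrow> y \<ge> 0 \<Longrightarrow> ct x y \<ge> 0"
    and ctot_dx: "\<And>x y. x \<ge> 0 \<Longrightarrow> y \<ge> 0 \<Longrightarrow>
        ((\<lambda>x'. c x' y + \<eta> x' y) has_real_derivative ctot_x x y) (at x within {0..})"
    and ctot_dy: "\<And>x y. x \<ge> 0 \<Longrightarrow> y \<ge> 0 \<Longrightarrow>
        ((\<lambda>y'. c x y' + \<eta> x y') has_real_derivative ctot_y x y) (at y within {0..})"
    and ct_dx: "\<And>x y. x \<ge> 0 \<Longrightarrow> y \<ge> 0 \<Longrightarrow>
        ((\<lambda>x'. ct x' y) has_real_derivative ct_x x y) (at x within {0..})"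
    and ct_dy: "\<And>x y. x \<ge> 0 \<Longrightarrow> y \<ge> 0 \<Longrightarrow>
        ((\<lambda>y'. ct x y') has_real_derivative ct_y x y) (at y within {0..})"
    and signs: "\<And>x y. x \<ge> 0 \<Longrightarrow> y \<ge> 0 \<Longrightarrow> ctot_x x y > 0"
      "\<And>x y. x \<ge> 0 \<Longrightarrow> y \<ge> 0 \<Longrightarrow> ctot_y x y \<ge> 0"
      "\<And>x y. x \<ge> 0 \<Longrightarrow> y \<ge> 0 \<Longrightarrow> ct_x x y \<ge> 0"
      "\<And>x y. x \<ge> 0 \<Longrightarrow> y \<ge> 0 \<Longrightarrow> ct_y x y > 0"
    and ct_lim: "\<And>x0. x0 \<ge> 0 \<Longrightarrow> filterlim (\<lambda>y. ct x0 y) at_top at_top"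
    and c_lim: "\<And>y0. y0 \<ge> 0 \<Longrightarrow> filterlim (\<lambda>x. c x y0) at_top at_top"
    and norm_cond: "\<And>x' y'. x' \<ge> 0 \<Longrightarrow> y' \<ge> 0 \<Longrightarrow>
        (AE p in lborel. fst p \<ge> 0 \<and> snd p \<ge> 0 \<longrightarrow>
           \<bar>ctot_y (fst p) (snd p)\<bar> \<le> ctot_x x' y')"
    and N_nn: "N1 \<ge> 0" "N2 \<ge> 0"
    and fin: "Ipos (\<lambda>a. bt a * surv d a * exp (- ct N1 N2 * a)) < \<infinity>"
      "Ipos (\<lambda>a. (k a + \<eta> N1 N2) * surv k a * exp (- (c N1 N2 + \<eta> N1 N2) * a)) < \<infinity>"
      "Ipos (\<lambda>a. b a * surv k a * exp (- (c N1 N2 + \<eta> N1 N2) * a)) < \<infinity>"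
      "Ipos (\<lambda>a. surv d a * exp (- ct N1 N2 * a)) < \<infinity>"
      "Ipos (\<lambda>a. surv k a * exp (- (c N1 N2 + \<eta> N1 N2) * a)) < \<infinity>"
    and eq1: "Ipos (\<lambda>a. bt a * surv d a * exp (- ct N1 N2 * a))
        * Ipos (\<lambda>a. (k a + \<eta> N1 N2) * surv k a * exp (- (c N1 N2 + \<eta> N1 N2) * a))
        + Ipos (\<lambda>a. b a * surv k a * exp (- (c N1 N2 + \<eta> N1 N2) * a)) = 1"
    and eq2: "ennreal N1 * Ipos (\<lambda>a. surv d a * exp (- ct N1 N2 * a))
        * Ipos (\<lambda>a. (k a + \<eta> N1 N2) * surv k a * exp (- (c N1 N2 + \<eta> N1 N2) * a))
        = ennreal N2 * Ipos (\<lambda>a. surv k a * exp (- (c N1 N2 + \<eta> N1 N2) * a))"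
    and Nst: "is_Nstar k b (\<lambda>N. c N 0 + \<eta> N 0) Nst"
  shows "N1 + N2 \<ge> Nst"
  
proof (cases "Nst = 0")
  case True
  then show ?thesis
    using N_nn by simp
next
  case False
  then obtain \<mu>0 where \<mu>0: "Ipos (\<lambda>a. b a * surv k a * exp (- \<mu>0 * a)) = 1" "c Nst 0 + \<eta> Nst 0 = \<mu>0"
    using Nst unfolding is_Nstar_def by auto
  have "\<mu>0 \<le> c N1 N2 + \<eta> N1 N2"
  proof (rule Ipos_exp_le_imp_rate_le[OF set_borel_measurable_mult_surv[OF meas(3), where k = k]])
    show "0 \<le> b a * surv k a" if "a \<ge> 0" for a
      using nonneg(3)[OF that] surv_nonneg by simp
    show "Ipos (\<lambda>a. b a * surv k a * exp (- (c N1 N2 + \<eta> N1 N2) * a))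
        \<le> Ipos (\<lambda>a. b a * surv k a * exp (- \<mu>0 * a))"
      unfolding \<mu>0(1) eq1[symmetric] by (rule add_increasing[OF zero_le order_refl])
  qed (use \<mu>0(1) in simp_all)
  moreover have "c N1 N2 + \<eta> N1 N2 < c Nst 0 + \<eta> Nst 0" if "N1 + N2 < Nst"
    by (rule less_axis_value[where F = "\<lambda>x y. c x y + \<eta> x y" and Fx = ctot_x and Fy = ctot_y])
      (use ctot_dx ctot_dy signs(1) norm_cond N_nn that in \<open>auto intro: less_imp_le\<close>)
  ultimately show ?thesis
    using \<mu>0(2) by force
qed

end
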